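(* Let $P_{Y|X}$ be a binary-input symmetric channel, i.e. a channel with input $X\in\{0,1\}$ for which there is a measurable involution $T:\mathcal Y\to\mathcal Y$ with $P_{Y|X=0}(T^{-1}A)=P_{Y|X=1}(A)$ for all measurable $A\subset\mathcal Y$. Then $$\eta_{\mathrm{KL}}(P_{Y|X})=I_{\chi^2}(X;Y)\quad\text{with }X\sim\mathrm{Bern}(1/2),$$ where $I_{\chi^2}(X;Y)=\chi^2(P_{XY}\|P_X\otimes P_Y)$.
   Context: $\chi^2(P\|Q)=\int dP\,(dP/dQ-1)^2$ if $P\ll Q$ and $\infty$ otherwise. For a channel $P_{Y|X}$, $\eta_{\mathrm{KL}}(P_{Y|X})=\sup D(Q_Y\|Q'_Y)/D(\pi_X\|\pi'_X)$ over pairs of input distributions $\pi_X\ne\pi'_X$ with $0<D(\pi_X\|\pi'_X)<\infty$, where $Q_Y,Q'_Y$ are the induced output distributions and $D$ is Kullback–Leibler divergence. *)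

theory Defs
  imports "HOL-Probability.Probability"
begin

text \<open>The integral is split into positive and negative parts of the
  log-likelihood ratio (the negative part is always finite when P << Q).\<close>
definition KL_div :: "'a measure \<Rightarrow> 'a measure \<Rightarrow> ereal" where
  "KL_div P Q =
    (if sets P = sets Q \<and> absolutely_continuous Q P then
       enn2ereal (\<integral>\<^sup>+ x. ennreal (ln (enn2real (RN_deriv Q P x))) \<partial>P)
       - enn2ereal (\<integral>\<^sup>+ x. ennreal (- ln (enn2real (RN_deriv Q P x))) \<partial>P)
     else \<infinity>)"

definition chi2_div :: "'a measure \<Rightarrow> 'a measure \<Rightarrow> ereal" where
  "chi2_div P Q =
    (if sets P = sets Q \<and> absolutely_continuous Q P then
       enn2ereal (\<integral>\<^sup>+ x. ennreal ((enn2real (RN_deriv Q P x) - 1)\<^sup>2) \<partial>P)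
     else \<infinity>)"

text \<open>A channel with binary input X in {0,1} (encoded as False/True) is a kernel
  K :: bool => 'b measure.  The output distribution induced by an input law pi is
  pi >>= K.\<close>
definition output_dist :: "bool pmf \<Rightarrow> (bool \<Rightarrow> 'b measure) \<Rightarrow> 'b measure" where
  "output_dist \<pi> K = measure_pmf \<pi> \<bind> K"

definition eta_KL :: "(bool \<Rightarrow> 'b measure) \<Rightarrow> ereal" where
  "eta_KL K = (SUP p \<in> {(\<pi>, \<pi>'). \<pi> \<noteq> \<pi>' \<and>
                        0 < KL_div (measure_pmf \<pi>) (measure_pmf \<pi>') \<and>
                        KL_div (measure_pmf \<pi>) (measure_pmf \<pi>') < \<infinity>}.
      KL_div (output_dist (fst p) K) (output_dist (snd p) K)
        / KL_div (measure_pmf (fst p)) (measure_pmf (snd p)))"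

definition joint_dist :: "bool pmf \<Rightarrow> (bool \<Rightarrow> 'b measure) \<Rightarrow> (bool \<times> 'b) measure" where
  "joint_dist \<pi> K =
     measure_pmf \<pi> \<bind> (\<lambda>x. distr (K x) (count_space UNIV \<Otimes>\<^sub>M K x) (\<lambda>y. (x, y)))"

definition chi2_mutual_info :: "bool pmf \<Rightarrow> (bool \<Rightarrow> 'b measure) \<Rightarrow> ereal" where
  "chi2_mutual_info \<pi> K =
     chi2_div (joint_dist \<pi> K) (measure_pmf \<pi> \<Otimes>\<^sub>M output_dist \<pi> K)"

end

theory Submission
  imports Defs "HOL-Real_Asymp.Real_Asymp"
begin

text \<open>
  Decompose the channel over the output law \<open>\<nu>\<close> of the uniform input: \<open>K 0 = (1 + g) \<nu>\<close> and
  \<open>K 1 = (1 - g) \<nu>\<close> with \<open>\<bar>g\<bar> \<le> 1\<close>. An input law of bias \<open>a = \<pi>(0) - \<pi>(1)\<close> has output density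
  \<open>1 + a g\<close>, so the output divergence for inputs of biases \<open>a\<close> and \<open>b\<close> is
  \<open>\<integral> (1 + a g) ln ((1 + a g) / (1 + b g)) d\<nu>\<close>. The symmetry \<open>T\<close> preserves \<open>\<nu>\<close> and turns \<open>g\<close>
  into \<open>-g\<close>, which symmetrises this integrand into \<open>d (a g) (b g)\<close>, where \<open>d a b\<close> is the input
  divergence in bias coordinates. As \<open>d (t a) (t b) \<le> t\<^sup>2 d a b\<close> for \<open>0 \<le> t \<le> 1\<close>, the contraction
  ratio is at most \<open>\<integral> g\<^sup>2 d\<nu>\<close>, which is the \<open>\<chi>\<^sup>2\<close>-information of the uniform input; and since
  \<open>d e 0 \<sim> e\<^sup>2 / 2\<close>, inputs of small bias against the uniform input attain the bound in the limit.
\<close>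

section \<open>The binary divergence in bias coordinates\<close>

lemma continuous_on_x_ln_x: "continuous_on {0..} (\<lambda>x::real. x * ln x)"
proof -
  have "((\<lambda>x::real. x * ln x) \<longlongrightarrow> 0) (at_right 0)"
    by real_asymp
  then have "continuous (at 0 within {0..}) (\<lambda>x::real. x * ln x)"
    by (simp add: continuous_within at_within_Ici_at_right)
  moreover have "isCont (\<lambda>x::real. x * ln x) x" if "x > 0" for x
    using that by (intro continuous_intros) auto
  ultimately show ?thesis
    by (metis atLeast_iff continuous_at_imp_continuous_at_within continuous_on_eq_continuous_within
        order_le_less)
qed

text \<open>\<open>binary_kl u v\<close> is the divergence between the Bernoulli laws with \<open>P(False) - P(True)\<close>
  equal to \<open>u\<close> and \<open>v\<close>; \<open>kl_term u v\<close> is the integrand of the divergence between the densities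
  \<open>1 + u\<close> and \<open>1 + v\<close>.\<close>

definition kl_term :: "real \<Rightarrow> real \<Rightarrow> real" where
  "kl_term u v = (1 + u) * ln ((1 + u) / (1 + v))"

definition binary_kl :: "real \<Rightarrow> real \<Rightarrow> real" where
  "binary_kl u v = (kl_term u v + kl_term (-u) (-v)) / 2"

lemma kl_term_eq:
  assumes "-1 \<le> u" "\<bar>v\<bar> < 1"
  shows "kl_term u v = (1 + u) * ln (1 + u) - (1 + u) * ln (1 + v)"
proof (cases "u = -1")
  case False
  then have "1 + u > 0" "1 + v > 0"
    using assms by auto
  then show ?thesis
    by (simp add: kl_term_def ln_div algebra_simps)
qed (simp add: kl_term_def)

lemma binary_kl_eq:
  assumes "\<bar>u\<bar> \<le> 1" "\<bar>v\<bar> < 1"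
  shows "binary_kl u v = ((1 + u) * ln (1 + u) - (1 + u) * ln (1 + v)
                          + (1 - u) * ln (1 - u) - (1 - u) * ln (1 - v)) / 2"
  using kl_term_eq[of u v] kl_term_eq[of "-u" "-v"] assms by (simp add: binary_kl_def)

lemma binary_kl_self [simp]: "binary_kl v v = 0"
  by (simp add: binary_kl_def kl_term_def)

lemma binary_kl_minus [simp]: "binary_kl (-u) (-v) = binary_kl u v"
  by (simp add: binary_kl_def)

lemma continuous_on_binary_kl:
  assumes "\<bar>v\<bar> < 1"
  shows "continuous_on {-1..1} (\<lambda>u. binary_kl u v)"
proof -
  have "continuous_on {-1..1} (\<lambda>u::real. (\<lambda>x. x * ln x) (1 + u))"
    and "continuous_on {-1..1} (\<lambda>u::real. (\<lambda>x. x * ln x) (1 - u))"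
    by (rule continuous_on_compose2[OF continuous_on_x_ln_x]; auto intro!: continuous_intros)+
  then have "continuous_on {-1..1} (\<lambda>u. ((1 + u) * ln (1 + u) - (1 + u) * ln (1 + v)
                          + (1 - u) * ln (1 - u) - (1 - u) * ln (1 - v)) / 2)"
    by (intro continuous_on_divide continuous_on_add continuous_on_diff)
       (auto intro!: continuous_intros)
  then show ?thesis
    by (rule continuous_on_cong[THEN iffD1, rotated 2]) (auto simp: binary_kl_eq assms)
qed

lemma binary_kl_has_real_derivative:
  assumes "\<bar>u\<bar> < 1" "\<bar>v\<bar> < 1"
  shows "((\<lambda>u. binary_kl u v) has_real_derivative artanh u - artanh v) (at u)"
proof -
  have "((\<lambda>u. ((1 + u) * ln (1 + u) - (1 + u) * ln (1 + v)
                + (1 - u) * ln (1 - u) - (1 - u) * ln (1 - v)) / 2) has_real_derivative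
        (ln (1 + u) - ln (1 + v) - ln (1 - u) + ln (1 - v)) / 2) (at u)"
    using assms by (auto intro!: derivative_eq_intros)
  also have "(ln (1 + u) - ln (1 + v) - ln (1 - u) + ln (1 - v)) / 2 = artanh u - artanh v"
    using assms by (simp add: artanh_def ln_div abs_less_iff field_simps)
  finally show ?thesis
    by (rule has_field_derivative_transform_within_open[where S = "{-1<..<1}"])
       (use assms in \<open>auto simp: binary_kl_eq\<close>)
qed

lemma artanh_scaled_diff_mono:
  fixes t x y :: real
  assumes "0 \<le> t" "t \<le> 1" "-1 < x" "x \<le> y" "y < 1"
  shows "t * artanh x - artanh (t * x) \<le> t * artanh y - artanh (t * y)"
proof (rule deriv_nonneg_imp_mono[where g = "\<lambda>z::real. t * artanh z - artanh (t * z)"])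
  fix z assume "z \<in> {x..y}"
  then have z: "\<bar>z\<bar> < 1"
    using assms by auto
  have tz: "\<bar>t * z\<bar> \<le> \<bar>z\<bar>"
    using assms by (simp add: abs_mult mult_left_le_one_le)
  have "((\<lambda>z. artanh (t * z)) has_real_derivative 1 / (1 - (t * z)\<^sup>2) * t) (at z)"
    using tz z by (intro DERIV_chain2[OF artanh_real_has_field_derivative]) 
                  (auto intro!: derivative_eq_intros)
  then show "((\<lambda>z. t * artanh z - artanh (t * z)) has_real_derivative
                    t * (1 / (1 - z\<^sup>2)) - 1 / (1 - (t * z)\<^sup>2) * t) (at z)"
    using z by (intro DERIV_diff DERIV_cmult artanh_real_has_field_derivative)
  have "(t * z)\<^sup>2 \<le> z\<^sup>2" "z\<^sup>2 < 1"
    using tz z by (simp_all add: abs_le_square_iff abs_square_less_1)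
  then have "1 / (1 - (t * z)\<^sup>2) \<le> 1 / (1 - z\<^sup>2)"
    by (intro divide_left_mono) auto
  from mult_left_mono[OF this, of t]
  show "0 \<le> t * (1 / (1 - z\<^sup>2)) - 1 / (1 - (t * z)\<^sup>2) * t"
    using assms by (simp add: mult.commute)
qed (fact \<open>x \<le> y\<close>)

lemma DERIV_sign_change_imp_min:
  fixes f f' :: "real \<Rightarrow> real"
  assumes "continuous_on {a..b} f" "v \<in> {a..b}" "u \<in> {a..b}"
    and "\<And>x. a < x \<Longrightarrow> x < b \<Longrightarrow> (f has_real_derivative f' x) (at x)"
    and "\<And>x. a < x \<Longrightarrow> x < v \<Longrightarrow> f' x \<le> 0"
    and "\<And>x. v < x \<Longrightarrow> x < b \<Longrightarrow> 0 \<le> f' x"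
  shows "f v \<le> f u"
proof (cases "v \<le> u")
  case True
  show ?thesis
  proof (rule DERIV_nonneg_imp_increasing_open[OF True])
    show "\<exists>d. (f has_real_derivative d) (at x) \<and> 0 \<le> d" if "v < x" "x < u" for x
      using assms that by (intro exI[of _ "f' x"]) auto
  qed (use assms in \<open>auto elim!: continuous_on_subset\<close>)
next
  case False
  show ?thesis
  proof (rule DERIV_nonpos_imp_decreasing_open[of u v f])
    show "\<exists>d. (f has_real_derivative d) (at x) \<and> d \<le> 0" if "u < x" "x < v" for x
      using assms that by (intro exI[of _ "f' x"]) auto
  qed (use assms False in \<open>auto elim!: continuous_on_subset\<close>)
qed

lemma binary_kl_scale_le:
  fixes t :: real
  assumes u: "\<bar>u\<bar> \<le> 1" and v: "\<bar>v\<bar> < 1" and t: "0 \<le> t" "t \<le> 1"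
  shows "binary_kl (t * u) (t * v) \<le> t\<^sup>2 * binary_kl u v"
proof -
  have scaled: "\<bar>t * x\<bar> \<le> \<bar>x\<bar>" for x
    using t by (simp add: abs_mult mult_left_le_one_le)
  define \<Phi> where "\<Phi> x = t\<^sup>2 * binary_kl x v - binary_kl (t * x) (t * v)" for x
  define \<psi> where "\<psi> x = t * artanh x - artanh (t * x)" for x
  \<comment> \<open>\<open>\<Phi>' x = t (\<psi> x - \<psi> v)\<close> and \<open>\<psi>\<close> is increasing, so \<open>\<Phi>\<close> is minimal at \<open>v\<close>, where it vanishes.\<close>
  have \<Phi>_deriv: "(\<Phi> has_real_derivative t * (\<psi> x - \<psi> v)) (at x)" if "\<bar>x\<bar> < 1" for x
  proof -
    have "(\<Phi> has_real_derivative
            t\<^sup>2 * (artanh x - artanh v) - (artanh (t * x) - artanh (t * v)) * t) (at x)"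
      unfolding \<Phi>_def
      using that v scaled[of x] scaled[of v]
      by (intro DERIV_diff DERIV_cmult DERIV_chain2[where f = "\<lambda>x. binary_kl x (t * v)"]
          binary_kl_has_real_derivative) (auto intro!: derivative_eq_intros)
    then show ?thesis
      by (simp add: \<psi>_def algebra_simps power2_eq_square)
  qed
  have "t * x \<in> {-1..1}" if "x \<in> {-1..1}" for x
    using scaled[of x] that by auto
  then have "continuous_on {-1..1} (\<lambda>x. binary_kl (t * x) (t * v))"
    using scaled[of v] v
    by (intro continuous_on_compose2[OF continuous_on_binary_kl]) (auto intro!: continuous_intros)
  then have "continuous_on {-1..1} \<Phi>"
    unfolding \<Phi>_def using v by (intro continuous_intros continuous_on_binary_kl)
  then have "\<Phi> v \<le> \<Phi> u"
  proof (rule DERIV_sign_change_imp_min)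
    show "t * (\<psi> x - \<psi> v) \<le> 0" if "-1 < x" "x < v" for x
      using artanh_scaled_diff_mono[of t x v] that t v by (simp add: \<psi>_def mult_nonneg_nonpos)
    show "0 \<le> t * (\<psi> x - \<psi> v)" if "v < x" "x < 1" for x
      using artanh_scaled_diff_mono[of t v x] that t v by (simp add: \<psi>_def)
  qed (use \<Phi>_deriv u v in auto)
  then show ?thesis
    by (simp add: \<Phi>_def)
qed

lemma artanh_ge_self:
  fixes x :: real
  assumes "0 \<le> x" "x < 1"
  shows "x \<le> artanh x"
proof -
  have "x - artanh x \<le> 0 - artanh 0"
  proof (rule deriv_nonpos_imp_antimono[where g = "\<lambda>x::real. x - artanh x"])
    fix z :: real assume "z \<in> {0..x}"
    then have z: "\<bar>z\<bar> < 1"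
      using assms by auto
    then show "((\<lambda>x. x - artanh x) has_real_derivative 1 - 1 / (1 - z\<^sup>2)) (at z)"
      by (auto intro!: derivative_eq_intros)
    have "0 < 1 - z\<^sup>2" "1 - z\<^sup>2 \<le> 1"
      using z by (simp_all add: abs_square_less_1)
    then show "1 - 1 / (1 - z\<^sup>2) \<le> 0"
      by simp
  qed (fact \<open>0 \<le> x\<close>)
  then show ?thesis
    by simp
qed

lemma artanh_le:
  fixes x :: real
  assumes "0 \<le> x" "x < 1"
  shows "artanh x \<le> x / (1 - x)"
proof -
  have "ln ((1 + x) / (1 - x)) \<le> (1 + x) / (1 - x) - 1"
    using assms by (intro ln_le_minus_one) auto
  also have "\<dots> = 2 * (x / (1 - x))"
    using assms by (simp add: field_simps)
  finally show ?thesis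
    unfolding artanh_def by linarith
qed

lemma binary_kl_zero_ge:
  assumes "\<bar>u\<bar> < 1"
  shows "u\<^sup>2 / 2 \<le> binary_kl u 0"
proof -
  have "x\<^sup>2 / 2 \<le> binary_kl x 0" if "0 \<le> x" "x < 1" for x
  proof -
    have "binary_kl 0 0 - 0\<^sup>2 / 2 \<le> binary_kl x 0 - x\<^sup>2 / 2"
    proof (rule deriv_nonneg_imp_mono[where g = "\<lambda>x. binary_kl x 0 - x\<^sup>2 / 2"])
      fix z :: real assume z: "z \<in> {0..x}"
      then show "((\<lambda>x. binary_kl x 0 - x\<^sup>2 / 2) has_real_derivative artanh z - z) (at z)"
        using that binary_kl_has_real_derivative[of z 0]
        by (auto intro!: derivative_eq_intros)
      show "0 \<le> artanh z - z"
        using artanh_ge_self[of z] z that by auto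
    qed (fact \<open>0 \<le> x\<close>)
    then show ?thesis
      by simp
  qed
  from this[of u] this[of "-u"] assms show ?thesis
    by (cases "0 \<le> u") (auto simp: binary_kl_minus[of u 0, simplified])
qed

lemma binary_kl_zero_pos:
  assumes "\<bar>u\<bar> < 1" "u \<noteq> 0"
  shows "0 < binary_kl u 0"
proof -
  have "0 < u\<^sup>2 / 2"
    using assms(2) by simp
  with binary_kl_zero_ge[OF assms(1)] show ?thesis
    by linarith
qed

lemma binary_kl_zero_le:
  assumes "0 \<le> e" "e < 1"
  shows "binary_kl e 0 \<le> e\<^sup>2 / (2 * (1 - e))"
proof -
  have "binary_kl e 0 - e\<^sup>2 / (2 * (1 - e)) \<le> binary_kl 0 0 - 0\<^sup>2 / (2 * (1 - e))"
  proof (rule deriv_nonpos_imp_antimono[where g = "\<lambda>x. binary_kl x 0 - x\<^sup>2 / (2 * (1 - e))"])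
    fix z :: real assume z: "z \<in> {0..e}"
    then show "((\<lambda>x. binary_kl x 0 - x\<^sup>2 / (2 * (1 - e))) has_real_derivative
                  artanh z - z / (1 - e)) (at z)"
      using assms binary_kl_has_real_derivative[of z 0]
      by (auto intro!: derivative_eq_intros) (simp add: field_simps)
    have "artanh z \<le> z / (1 - z)"
      using artanh_le[of z] z assms by auto
    also have "\<dots> \<le> z / (1 - e)"
      using z assms by (intro divide_left_mono) auto
    finally show "artanh z - z / (1 - e) \<le> 0"
      by simp
  qed (fact \<open>0 \<le> e\<close>)
  then show ?thesis
    by simp
qed

lemma abs_kl_term_le:
  assumes u: "\<bar>u\<bar> \<le> 1" and v: "\<bar>v\<bar> \<le> \<beta>" and \<beta>: "\<beta> < 1"
  shows "\<bar>kl_term u v\<bar> \<le> 2 + 4 / (1 - \<beta>)"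
proof (cases "u = -1")
  case False
  then have u1: "0 < 1 + u" 
    using u by auto
  have v1: "1 - \<beta> \<le> 1 + v" "0 < 1 - \<beta>"
    using v \<beta> by auto
  define r where "r = (1 + u) / (1 + v)"
  have r: "0 < r" 
    using u1 v1 by (simp add: r_def)
  have "(1 + u) * ln r \<le> (1 + u) * (r - 1)"
    using ln_le_minus_one[OF r] u1 by (intro mult_left_mono) auto
  also have "\<dots> \<le> (1 + u) * r"
    using u1 by simp
  also have "\<dots> = (1 + u)\<^sup>2 / (1 + v)"
    by (simp add: r_def power2_eq_square)
  also have "\<dots> \<le> 4 / (1 - \<beta>)"
  proof -
    have "(1 + u)\<^sup>2 \<le> 2\<^sup>2"
      using u u1 by (intro power_mono) auto
    then show ?thesis
      using v1 by (intro frac_le) auto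
  qed
  finally have upper: "(1 + u) * ln r \<le> 4 / (1 - \<beta>)" .
  have "ln (1 / r) \<le> 1 / r - 1"
    using r by (intro ln_le_minus_one) auto
  then have "(1 + u) * (1 - 1 / r) \<le> (1 + u) * ln r"
    using r u1 by (intro mult_left_mono) (auto simp: ln_div)
  moreover have "(1 + u) * (1 - 1 / r) = u - v"
    using u1 v1 by (simp add: r_def field_simps)
  ultimately have lower: "-2 \<le> (1 + u) * ln r"
    using u v \<beta> by auto
  moreover have "0 \<le> 4 / (1 - \<beta>)"
    using v1 by simp
  ultimately have "\<bar>(1 + u) * ln r\<bar> \<le> 2 + 4 / (1 - \<beta>)"
    using upper by (simp only: abs_le_iff) linarith
  then show ?thesis
    by (simp add: kl_term_def r_def)
qed (use \<beta> in \<open>simp add: kl_term_def\<close>)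

section \<open>Divergences of densities\<close>

lemma KL_div_eq_integral:
  assumes "sets P = sets Q" "absolutely_continuous Q P"
    and int: "integrable P (\<lambda>x. ln (enn2real (RN_deriv Q P x)))"
  shows "KL_div P Q = ereal (\<integral>x. ln (enn2real (RN_deriv Q P x)) \<partial>P)"
proof -
  let ?L = "\<lambda>x. ln (enn2real (RN_deriv Q P x))"
  have "(\<integral>\<^sup>+x. ennreal (?L x) \<partial>P) \<noteq> \<top>" "(\<integral>\<^sup>+x. ennreal (- ?L x) \<partial>P) \<noteq> \<top>"
    using integrableD(2,3)[OF int] by auto
  moreover have "enn2ereal X = ereal (enn2real X)" if "X \<noteq> \<top>" for X
    using that by (metis enn2ereal_ennreal enn2real_nonneg ennreal_enn2real top.not_eq_extremum)
  ultimately show ?thesis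
    using assms by (simp add: KL_div_def real_lebesgue_integral_def[OF int])
qed

lemma AE_RN_deriv_density_density:
  fixes h h' :: "'a \<Rightarrow> real"
  assumes [measurable]: "h \<in> borel_measurable \<nu>" "h' \<in> borel_measurable \<nu>"
    and h'_pos: "\<And>y. y \<in> space \<nu> \<Longrightarrow> 0 < h' y"
    and fin: "sigma_finite_measure (density \<nu> h)"
  shows "AE y in \<nu>. RN_deriv (density \<nu> h') (density \<nu> h) y = ennreal (h y / h' y)"
proof -
  have "density (density \<nu> h') (\<lambda>y. ennreal (h y / h' y)) =
          density \<nu> (\<lambda>y. ennreal (h' y) * ennreal (h y / h' y))"
    by (intro density_density_eq) auto
  also have "\<dots> = density \<nu> h"
    using h'_pos by (intro density_cong AE_I2) (auto simp: less_imp_le dest!: h'_pos simp flip: ennreal_mult')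
  finally have "AE y in density \<nu> h'. ennreal (h y / h' y) = RN_deriv (density \<nu> h') (density \<nu> h) y"
    using fin by (intro RN_deriv_unique_sigma_finite) auto
  then have "AE y in \<nu>. 0 < h' y \<longrightarrow>
                ennreal (h y / h' y) = RN_deriv (density \<nu> h') (density \<nu> h) y"
    by (subst (asm) AE_density) auto
  then show ?thesis
    using AE_space by eventually_elim (use h'_pos in auto)
qed

lemma KL_div_density:
  fixes h h' :: "'a \<Rightarrow> real"
  assumes [measurable]: "h \<in> borel_measurable \<nu>" "h' \<in> borel_measurable \<nu>"
    and h_nonneg: "\<And>y. y \<in> space \<nu> \<Longrightarrow> 0 \<le> h y"
    and h'_pos: "\<And>y. y \<in> space \<nu> \<Longrightarrow> 0 < h' y"
    and fin: "sigma_finite_measure (density \<nu> h)"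
    and int: "integrable \<nu> (\<lambda>y. h y * ln (h y / h' y))"
  shows "KL_div (density \<nu> h) (density \<nu> h') = ereal (\<integral>y. h y * ln (h y / h' y) \<partial>\<nu>)"
proof -
  let ?L = "\<lambda>y. ln (enn2real (RN_deriv (density \<nu> h') (density \<nu> h) y))"
  have [measurable]: "?L \<in> borel_measurable \<nu>"
    using borel_measurable_RN_deriv[of "density \<nu> h'" "density \<nu> h"]
    by (simp add: measurable_cong_sets[of "density \<nu> h'" \<nu>])
  have L_eq: "AE y in \<nu>. h y *\<^sub>R ?L y = h y * ln (h y / h' y)"
    using AE_RN_deriv_density_density[OF assms(1,2) h'_pos fin]
    by (rule AE_mp) (auto intro!: AE_I2 simp: h_nonneg h'_pos less_imp_le)
  have ac: "absolutely_continuous (density \<nu> h') (density \<nu> h)"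
    unfolding absolutely_continuous_def
  proof
    fix A assume "A \<in> null_sets (density \<nu> h')"
    then have "A \<in> sets \<nu>" and "AE y in \<nu>. y \<in> A \<longrightarrow> ennreal (h' y) = 0"
      by (auto simp: null_sets_density_iff)
    moreover from this(2) have "AE y in \<nu>. y \<notin> A"
      by (rule AE_mp) (auto intro!: AE_I2 dest: h'_pos)
    ultimately show "A \<in> null_sets (density \<nu> h)"
      by (auto simp: null_sets_density_iff elim: eventually_mono)
  qed
  have "integrable (density \<nu> h) ?L"
    using h_nonneg L_eq int by (subst integrable_density) (auto intro: integrable_cong_AE_imp)
  then have "KL_div (density \<nu> h) (density \<nu> h') = ereal (\<integral>y. ?L y \<partial>density \<nu> h)"
    using ac by (intro KL_div_eq_integral) auto
  also have "(\<integral>y. ?L y \<partial>density \<nu> h) = (\<integral>y. h y * ln (h y / h' y) \<partial>\<nu>)"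
    using h_nonneg L_eq by (subst integral_density) (auto intro!: integral_cong_AE)
  finally show ?thesis .
qed

lemma chi2_div_density:
  fixes r :: "'a \<Rightarrow> real"
  assumes "sigma_finite_measure P" and [measurable]: "r \<in> borel_measurable P"
    and r_nonneg: "\<And>z. z \<in> space P \<Longrightarrow> 0 \<le> r z"
  shows "chi2_div (density P r) P = enn2ereal (\<integral>\<^sup>+z. ennreal (r z * (r z - 1)\<^sup>2) \<partial>P)"
proof -
  have "AE z in P. ennreal (r z) = RN_deriv P (density P r) z"
    using assms(1) by (intro sigma_finite_measure.RN_deriv_unique) auto
  then have "AE z in P. enn2real (RN_deriv P (density P r) z) = r z"
    by (rule AE_mp) (auto intro!: AE_I2 simp: r_nonneg dest: sym[where t = "RN_deriv _ _ _"])
  then have "AE z in density P r. ennreal ((enn2real (RN_deriv P (density P r) z) - 1)\<^sup>2) =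
                                   ennreal ((r z - 1)\<^sup>2)"
    by (subst AE_density) (auto elim: eventually_mono)
  then have "(\<integral>\<^sup>+z. ennreal ((enn2real (RN_deriv P (density P r) z) - 1)\<^sup>2) \<partial>density P r) =
               (\<integral>\<^sup>+z. ennreal (r z) * ennreal ((r z - 1)\<^sup>2) \<partial>P)"
    by (subst nn_integral_cong_AE[where v = "\<lambda>z. ennreal ((r z - 1)\<^sup>2)"])
       (auto intro: nn_integral_density)
  also have "\<dots> = (\<integral>\<^sup>+z. ennreal (r z * (r z - 1)\<^sup>2) \<partial>P)"
    by (intro nn_integral_cong) (simp add: ennreal_mult r_nonneg)
  finally show ?thesis
    by (simp add: chi2_div_def absolutely_continuousI_density)
qed

section \<open>Channels with binary input\<close>

lemma nn_integral_measure_pmf_bool: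
  "(\<integral>\<^sup>+x. f x \<partial>measure_pmf \<pi>) = ennreal (pmf \<pi> False) * f False + ennreal (pmf \<pi> True) * f True"
  by (simp add: nn_integral_measure_pmf nn_integral_count_space_finite UNIV_bool add.commute)

lemma sets_output_dist:
  assumes "\<And>x. sets (K x) = sets M"
  shows "sets (output_dist \<pi> K) = sets M"
  unfolding output_dist_def by (rule sets_bind) (use assms in auto)

lemma emeasure_output_dist:
  assumes "\<And>x. prob_space (K x)" "\<And>x. sets (K x) = sets M" "A \<in> sets M"
  shows "emeasure (output_dist \<pi> K) A =
           ennreal (pmf \<pi> False) * emeasure (K False) A + ennreal (pmf \<pi> True) * emeasure (K True) A"
proof -
  have "K \<in> measure_pmf \<pi> \<rightarrow>\<^sub>M subprob_algebra M"
    using assms by (auto simp: space_subprob_algebra prob_space_imp_subprob_space)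
  then show ?thesis
    unfolding output_dist_def using assms(3)
    by (subst emeasure_bind) (auto simp: nn_integral_measure_pmf_bool)
qed

definition bias :: "bool pmf \<Rightarrow> real" where
  "bias \<pi> = pmf \<pi> False - pmf \<pi> True"

lemma bias_conv_pmf_True: "bias \<pi> = 1 - 2 * pmf \<pi> True"
  by (simp add: bias_def pmf_False_conv_True)

lemma abs_bias_le_1: "\<bar>bias \<pi>\<bar> \<le> 1"
  using pmf_le_1[of \<pi> True] pmf_nonneg[of \<pi> True] unfolding bias_conv_pmf_True by linarith

lemma bias_inject: "bias \<pi> = bias \<pi>' \<longleftrightarrow> \<pi> = \<pi>'"
proof
  assume "bias \<pi> = bias \<pi>'"
  then have "pmf \<pi> x = pmf \<pi>' x" for x
    by (cases x) (simp_all add: bias_conv_pmf_True pmf_False_conv_True)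
  then show "\<pi> = \<pi>'"
    by (rule pmf_eqI)
qed simp

lemma bias_bernoulli_pmf: "0 \<le> p \<Longrightarrow> p \<le> 1 \<Longrightarrow> bias (bernoulli_pmf p) = 1 - 2 * p"
  by (simp add: bias_conv_pmf_True)

lemma prob_space_output_dist:
  assumes "\<And>x. prob_space (K x)" "\<And>x. sets (K x) = sets M"
  shows "prob_space (output_dist \<pi> K)"
proof
  have "emeasure (K x) (space M) = 1" for x
    using prob_space.emeasure_space_1[OF assms(1)] sets_eq_imp_space_eq[OF assms(2)] by metis
  then have "emeasure (output_dist \<pi> K) (space M) = ennreal (pmf \<pi> False + pmf \<pi> True)"
    using assms by (simp add: emeasure_output_dist ennreal_plus)
  then show "emeasure (output_dist \<pi> K) (space (output_dist \<pi> K)) = 1"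
    using sets_eq_imp_space_eq[OF sets_output_dist[OF assms(2)]] by (simp add: pmf_False_conv_True)
qed

text \<open>Every channel with binary input has this form, with \<open>\<nu>\<close> the output law of the uniform input
  (see \<open>binary_input_channel_output_uniform\<close>).\<close>

locale binary_input_channel = prob_space \<nu> for \<nu> :: "'b measure" +
  fixes K :: "bool \<Rightarrow> 'b measure" and g :: "'b \<Rightarrow> real"
  assumes prob_space_K: "prob_space (K x)"
    and g_measurable [measurable]: "g \<in> borel_measurable \<nu>"
    and abs_g_le_1: "y \<in> space \<nu> \<Longrightarrow> \<bar>g y\<bar> \<le> 1"
    and K_False: "K False = density \<nu> (\<lambda>y. 1 + g y)"
    and K_True: "K True = density \<nu> (\<lambda>y. 1 - g y)"
begin

lemma sets_K [measurable_cong]: "sets (K x) = sets \<nu>"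
  by (cases x) (simp_all add: K_False K_True)

lemma output_dist_eq_density: "output_dist \<pi> K = density \<nu> (\<lambda>y. 1 + bias \<pi> * g y)"
proof (rule measure_eqI)
  fix A assume "A \<in> sets (output_dist \<pi> K)"
  then have A: "A \<in> sets \<nu>"
    by (simp add: sets_output_dist[OF sets_K])
  let ?p = "pmf \<pi> False" and ?q = "pmf \<pi> True"
  have "emeasure (output_dist \<pi> K) A =
          ?p * (\<integral>\<^sup>+y. ennreal (1 + g y) * indicator A y \<partial>\<nu>)
          + ?q * (\<integral>\<^sup>+y. ennreal (1 - g y) * indicator A y \<partial>\<nu>)"
    using A by (simp add: emeasure_output_dist[OF prob_space_K sets_K] K_False K_True emeasure_density)
  also have "\<dots> = (\<integral>\<^sup>+y. (?p * ennreal (1 + g y) + ?q * ennreal (1 - g y)) * indicator A y \<partial>\<nu>)"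
    using A by (simp add: nn_integral_add nn_integral_cmult distrib_right mult.assoc)
  also have "\<dots> = (\<integral>\<^sup>+y. ennreal (1 + bias \<pi> * g y) * indicator A y \<partial>\<nu>)"
  proof (intro nn_integral_cong arg_cong2[where f = "(*)"] refl)
    fix y assume "y \<in> space \<nu>"
    then have "0 \<le> 1 + g y" "0 \<le> 1 - g y"
      using abs_g_le_1[of y] by (auto simp: abs_le_iff)
    then have "?p * ennreal (1 + g y) + ?q * ennreal (1 - g y) = ennreal (?p * (1 + g y) + ?q * (1 - g y))"
      by (simp add: ennreal_mult ennreal_plus)
    also have "?p * (1 + g y) + ?q * (1 - g y) = 1 + bias \<pi> * g y"
      by (simp add: bias_def pmf_False_conv_True algebra_simps)
    finally show "?p * ennreal (1 + g y) + ?q * ennreal (1 - g y) = ennreal (1 + bias \<pi> * g y)" .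
  qed
  finally show "emeasure (output_dist \<pi> K) A = emeasure (density \<nu> (\<lambda>y. 1 + bias \<pi> * g y)) A"
    using A by (simp add: emeasure_density)
qed (simp add: sets_output_dist[OF sets_K])

lemma output_dist_uniform: "output_dist (bernoulli_pmf (1/2)) K = \<nu>"
  by (simp add: output_dist_eq_density bias_bernoulli_pmf density_1)

lemma abs_mult_g_le: "y \<in> space \<nu> \<Longrightarrow> \<bar>a * g y\<bar> \<le> \<bar>a\<bar>"
  using abs_g_le_1[of y] by (simp add: abs_mult mult_left_le)

lemma integrable_kl_term:
  assumes "\<bar>a\<bar> \<le> 1" "\<bar>b\<bar> < 1"
  shows "integrable \<nu> (\<lambda>y. kl_term (a * g y) (b * g y))"
proof (rule integrable_const_bound[where B = "2 + 4 / (1 - \<bar>b\<bar>)"])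
  show "AE y in \<nu>. norm (kl_term (a * g y) (b * g y)) \<le> 2 + 4 / (1 - \<bar>b\<bar>)"
    using assms abs_mult_g_le by (intro AE_I2) (auto intro: abs_kl_term_le order_trans)
qed (simp add: kl_term_def)

lemma KL_div_output_dist_eq_integral_kl_term:
  assumes "\<bar>bias \<pi>'\<bar> < 1"
  shows "KL_div (output_dist \<pi> K) (output_dist \<pi>' K) =
           ereal (\<integral>y. kl_term (bias \<pi> * g y) (bias \<pi>' * g y) \<partial>\<nu>)"
proof -
  have "sigma_finite_measure (density \<nu> (\<lambda>y. 1 + bias \<pi> * g y))"
    using prob_space_output_dist[where K = K, OF prob_space_K sets_K, of \<pi>]
    by (simp add: output_dist_eq_density prob_space_imp_sigma_finite)
  moreover have "0 \<le> 1 + bias \<pi> * g y" "0 < 1 + bias \<pi>' * g y" if "y \<in> space \<nu>" for y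
    using abs_mult_g_le[OF that, of "bias \<pi>"] abs_mult_g_le[OF that, of "bias \<pi>'"]
      abs_bias_le_1[of \<pi>] assms by (auto simp: abs_le_iff)
  moreover have "integrable \<nu> (\<lambda>y. kl_term (bias \<pi> * g y) (bias \<pi>' * g y))"
    using abs_bias_le_1 assms by (rule integrable_kl_term)
  ultimately show ?thesis
    unfolding output_dist_eq_density by (subst KL_div_density) (auto simp: kl_term_def)
qed

lemma sets_pair_measure_K: "sets (measure_pmf \<pi> \<Otimes>\<^sub>M \<nu>) = sets (count_space UNIV \<Otimes>\<^sub>M K x)"
  by (intro sets_pair_measure_cong) (simp_all add: sets_K)

lemma measurable_joint_kernel:
  "(\<lambda>x. distr (K x) (count_space UNIV \<Otimes>\<^sub>M K x) (Pair x))
     \<in> measure_pmf \<pi> \<rightarrow>\<^sub>M subprob_algebra (measure_pmf \<pi> \<Otimes>\<^sub>M \<nu>)"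
proof -
  have "prob_space (distr (K x) (count_space UNIV \<Otimes>\<^sub>M K x) (Pair x))" for x
    using prob_space_K by (intro prob_space.prob_space_distr measurable_Pair1') auto
  then show ?thesis
    using sets_pair_measure_K[of \<pi>] by (auto simp: space_subprob_algebra prob_space_imp_subprob_space)
qed

lemma sets_joint_dist: "sets (joint_dist \<pi> K) = sets (measure_pmf \<pi> \<Otimes>\<^sub>M \<nu>)"
  unfolding joint_dist_def using measurable_joint_kernel by (rule sets_bind_measurable) simp

lemma emeasure_joint_dist:
  assumes "C \<in> sets (measure_pmf \<pi> \<Otimes>\<^sub>M \<nu>)"
  shows "emeasure (joint_dist \<pi> K) C = (\<integral>\<^sup>+x. emeasure (K x) (Pair x -` C \<inter> space \<nu>) \<partial>measure_pmf \<pi>)"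
  unfolding joint_dist_def using assms sets_pair_measure_K[of \<pi>]
  by (subst emeasure_bind[OF _ measurable_joint_kernel assms])
     (auto intro!: nn_integral_cong simp: emeasure_distr measurable_Pair1' sets_eq_imp_space_eq[OF sets_K]
      vimage_def)

lemma joint_dist_eq_density:
  "joint_dist \<pi> K = density (measure_pmf \<pi> \<Otimes>\<^sub>M \<nu>) (\<lambda>(x, y). if x then 1 - g y else 1 + g y)"
    (is "_ = density ?P _")
proof -
  define r :: "bool \<times> 'b \<Rightarrow> real" where "r = (\<lambda>(x, y). if x then 1 - g y else 1 + g y)"
  have [measurable]: "r \<in> borel_measurable ?P"
    unfolding r_def by measurable
  show ?thesis
    unfolding r_def[symmetric]
  proof (rule measure_eqI)
    fix C assume "C \<in> sets (joint_dist \<pi> K)"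
    then have C: "C \<in> sets ?P"
      by (simp add: sets_joint_dist)
    have "emeasure (K x) (Pair x -` C \<inter> space \<nu>) =
            (\<integral>\<^sup>+y. ennreal (r (x, y)) * indicator C (x, y) \<partial>\<nu>)" for x
    proof -
      have "Pair x -` C \<inter> space \<nu> \<in> sets \<nu>"
        using sets_Pair1[of C "count_space UNIV" \<nu>] C sets_pair_measure_K[of \<pi> x]
        by (simp add: sets.Int_space_eq2)
      moreover have "(\<integral>\<^sup>+y. ennreal (r (x, y)) * indicator C (x, y) \<partial>\<nu>) =
                       (\<integral>\<^sup>+y. ennreal (r (x, y)) * indicator (Pair x -` C \<inter> space \<nu>) y \<partial>\<nu>)"
        by (intro nn_integral_cong) (auto simp: indicator_def)
      ultimately show ?thesis
        by (cases x) (simp_all add: K_False K_True emeasure_density r_def)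
    qed
    then have "emeasure (joint_dist \<pi> K) C =
                 (\<integral>\<^sup>+x. \<integral>\<^sup>+y. ennreal (r (x, y)) * indicator C (x, y) \<partial>\<nu> \<partial>measure_pmf \<pi>)"
      using C by (simp add: emeasure_joint_dist)
    also have "\<dots> = (\<integral>\<^sup>+z. ennreal (r z) * indicator C z \<partial>?P)"
      using nn_integral_fst[of "\<lambda>z. ennreal (r z) * indicator C z" "measure_pmf \<pi>"] C by simp
    also have "\<dots> = emeasure (density ?P r) C"
      using C by (simp add: emeasure_density)
    finally show "emeasure (joint_dist \<pi> K) C = emeasure (density ?P r) C" .
  qed (simp add: sets_joint_dist)
qed

lemma integrable_g_square: "integrable \<nu> (\<lambda>y. (g y)\<^sup>2)"
proof (rule integrable_const_bound[where B = 1])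
  show "AE y in \<nu>. norm ((g y)\<^sup>2) \<le> 1"
    using abs_g_le_1 by (intro AE_I2) (simp add: abs_square_le_1)
qed simp

lemma chi2_mutual_info_uniform:
  "chi2_mutual_info (bernoulli_pmf (1/2)) K = ereal (\<integral>y. (g y)\<^sup>2 \<partial>\<nu>)"
proof -
  let ?U = "measure_pmf (bernoulli_pmf (1/2))"
  define r :: "bool \<times> 'b \<Rightarrow> real" where "r = (\<lambda>(x, y). if x then 1 - g y else 1 + g y)"
  have r_nonneg: "0 \<le> r z" if "z \<in> space (?U \<Otimes>\<^sub>M \<nu>)" for z
    using that by (auto simp: r_def space_pair_measure abs_le_iff dest!: abs_g_le_1 split: prod.splits)
  have "sigma_finite_measure (?U \<Otimes>\<^sub>M \<nu>)"
    by (intro prob_space_imp_sigma_finite prob_space_pair prob_space_measure_pmf prob_space_axioms)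
  then have "chi2_mutual_info (bernoulli_pmf (1/2)) K =
               enn2ereal (\<integral>\<^sup>+z. ennreal (r z * (r z - 1)\<^sup>2) \<partial>(?U \<Otimes>\<^sub>M \<nu>))"
    unfolding chi2_mutual_info_def output_dist_uniform joint_dist_eq_density r_def[symmetric]
    using r_nonneg by (intro chi2_div_density) (auto simp: r_def)
  also have "(\<integral>\<^sup>+z. ennreal (r z * (r z - 1)\<^sup>2) \<partial>(?U \<Otimes>\<^sub>M \<nu>)) =
               (\<integral>\<^sup>+x. \<integral>\<^sup>+y. ennreal (r (x, y) * (r (x, y) - 1)\<^sup>2) \<partial>\<nu> \<partial>?U)"
    by (rule nn_integral_fst[symmetric]) (simp add: r_def)
  also have "\<dots> = (\<integral>\<^sup>+y. ennreal (1/2) * ennreal ((1 + g y) * (g y)\<^sup>2)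
                              + ennreal (1/2) * ennreal ((1 - g y) * (g y)\<^sup>2) \<partial>\<nu>)"
    by (simp add: nn_integral_measure_pmf_bool r_def nn_integral_add nn_integral_cmult)
  also have "\<dots> = (\<integral>\<^sup>+y. ennreal ((g y)\<^sup>2) \<partial>\<nu>)"
  proof (intro nn_integral_cong)
    fix y assume "y \<in> space \<nu>"
    then have "0 \<le> 1 + g y" "0 \<le> 1 - g y"
      using abs_g_le_1[of y] by (auto simp: abs_le_iff)
    then have "ennreal (1/2) * ennreal ((1 + g y) * (g y)\<^sup>2) + ennreal (1/2) * ennreal ((1 - g y) * (g y)\<^sup>2)
                 = ennreal ((1 + g y) * (g y)\<^sup>2 / 2 + (1 - g y) * (g y)\<^sup>2 / 2)"
      by (subst (1 2) ennreal_mult'[symmetric]) (auto simp del: ennreal_plus simp: ennreal_plus[symmetric])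
    also have "(1 + g y) * (g y)\<^sup>2 / 2 + (1 - g y) * (g y)\<^sup>2 / 2 = (g y)\<^sup>2"
      by (simp add: field_simps)
    finally show "ennreal (1/2) * ennreal ((1 + g y) * (g y)\<^sup>2) + ennreal (1/2) * ennreal ((1 - g y) * (g y)\<^sup>2)
                 = ennreal ((g y)\<^sup>2)" .
  qed
  also have "\<dots> = ennreal (\<integral>y. (g y)\<^sup>2 \<partial>\<nu>)"
    using integrable_g_square by (intro nn_integral_eq_integral) auto
  finally show ?thesis
    by simp
qed

lemma integrable_binary_kl:
  assumes "\<bar>a\<bar> \<le> 1" "\<bar>b\<bar> < 1"
  shows "integrable \<nu> (\<lambda>y. binary_kl (a * g y) (b * g y))"
  using integrable_kl_term[OF assms] integrable_kl_term[of "-a" "-b"] assms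
  by (simp add: binary_kl_def)

lemma integral_binary_kl_le:
  assumes "\<bar>a\<bar> \<le> 1" "\<bar>b\<bar> < 1"
  shows "(\<integral>y. binary_kl (a * g y) (b * g y) \<partial>\<nu>) \<le> (\<integral>y. (g y)\<^sup>2 \<partial>\<nu>) * binary_kl a b"
proof -
  have "binary_kl (a * g y) (b * g y) \<le> (g y)\<^sup>2 * binary_kl a b" if "y \<in> space \<nu>" for y
  proof (cases "0 \<le> g y")
    case True
    then show ?thesis
      using binary_kl_scale_le[OF assms, of "g y"] abs_g_le_1[OF that] by (simp add: mult.commute)
  next
    case False
    then have "binary_kl (- g y * a) (- g y * b) \<le> (- g y)\<^sup>2 * binary_kl a b"
      using abs_g_le_1[OF that] by (intro binary_kl_scale_le assms) auto
    then show ?thesis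
      by (simp add: mult.commute)
  qed
  then have "(\<integral>y. binary_kl (a * g y) (b * g y) \<partial>\<nu>) \<le> (\<integral>y. (g y)\<^sup>2 * binary_kl a b \<partial>\<nu>)"
    using integrable_binary_kl[OF assms] integrable_g_square by (intro integral_mono) auto
  then show ?thesis
    by simp
qed

lemma integral_binary_kl_zero_ge:
  assumes "\<bar>e\<bar> < 1"
  shows "e\<^sup>2 / 2 * (\<integral>y. (g y)\<^sup>2 \<partial>\<nu>) \<le> (\<integral>y. binary_kl (e * g y) 0 \<partial>\<nu>)"
proof -
  have "(e * g y)\<^sup>2 / 2 \<le> binary_kl (e * g y) 0" if "y \<in> space \<nu>" for y
    using abs_mult_g_le[OF that, of e] assms by (intro binary_kl_zero_ge) simp
  then have "(\<integral>y. (e * g y)\<^sup>2 / 2 \<partial>\<nu>) \<le> (\<integral>y. binary_kl (e * g y) 0 \<partial>\<nu>)"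
    using integrable_binary_kl[of e 0] integrable_g_square assms
    by (intro integral_mono) (auto simp: power_mult_distrib)
  then show ?thesis
    by (simp add: power_mult_distrib)
qed

end

lemma density_RN_deriv_output_uniform:
  assumes prob: "\<And>x. prob_space (K x)" and sets_K: "\<And>x. sets (K x) = sets M"
  defines "\<nu> \<equiv> output_dist (bernoulli_pmf (1/2)) K"
  shows "density \<nu> (RN_deriv \<nu> (K x)) = K x"
proof -
  interpret \<nu>: prob_space \<nu>
    unfolding \<nu>_def using prob sets_K by (rule prob_space_output_dist)
  have sets_\<nu>: "sets \<nu> = sets M"
    unfolding \<nu>_def using sets_K by (rule sets_output_dist)
  have "absolutely_continuous \<nu> (K x)"
    unfolding absolutely_continuous_def
  proof
    fix A assume "A \<in> null_sets \<nu>"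
    then have A: "A \<in> sets M" "emeasure \<nu> A = 0"
      using sets_\<nu> by auto
    then have "emeasure (K False) A = 0 \<and> emeasure (K True) A = 0"
      using emeasure_output_dist[where K = K, OF prob sets_K A(1)] by (simp add: \<nu>_def)
    then show "A \<in> null_sets (K x)"
      using sets_K A(1) by (cases x) auto
  qed
  then show ?thesis
    using sets_K sets_\<nu> by (intro \<nu>.density_RN_deriv) auto
qed

lemma AE_RN_deriv_output_uniform_add:
  assumes prob: "\<And>x. prob_space (K x)" and sets_K: "\<And>x. sets (K x) = sets M"
  defines "\<nu> \<equiv> output_dist (bernoulli_pmf (1/2)) K"
  shows "AE y in \<nu>. RN_deriv \<nu> (K False) y + RN_deriv \<nu> (K True) y = 2"
proof -
  interpret \<nu>: prob_space \<nu>
    unfolding \<nu>_def using prob sets_K by (rule prob_space_output_dist)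
  let ?r = "\<lambda>x. RN_deriv \<nu> (K x)"
  have "density \<nu> (\<lambda>y. ?r False y + ?r True y) = density \<nu> (\<lambda>_. 2)"
  proof (rule measure_eqI)
    fix A assume "A \<in> sets (density \<nu> (\<lambda>y. ?r False y + ?r True y))"
    then have A: "A \<in> sets M" "A \<in> sets \<nu>"
      using sets_output_dist[OF sets_K] by (simp_all add: \<nu>_def)
    have "2 * inverse (2::ennreal) = 1"
      using ennreal_divide_self[of 2] by (simp add: divide_ennreal_def)
    then have "emeasure (density \<nu> (\<lambda>y. ?r False y + ?r True y)) A = 2 * emeasure \<nu> A"
      using A emeasure_output_dist[where K = K, OF prob sets_K A(1)]
      by (simp add: emeasure_density_add[symmetric] distrib_left mult.assoc[symmetric]
          density_RN_deriv_output_uniform[where K = K, OF prob sets_K] \<nu>_def)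
    then show "emeasure (density \<nu> (\<lambda>y. ?r False y + ?r True y)) A = emeasure (density \<nu> (\<lambda>_. 2)) A"
      using A by (simp add: emeasure_density nn_integral_cmult_indicator)
  qed simp
  then show ?thesis
    by (intro \<nu>.density_unique) auto
qed

lemma ennreal_add_eq_2:
  fixes x y :: ennreal
  assumes "x + y = 2"
  shows "enn2real x \<le> 2" "x = ennreal (enn2real x)" "y = ennreal (2 - enn2real x)"
proof -
  have "x \<noteq> \<top>" "y \<noteq> \<top>"
    using assms by auto
  then obtain a b where ab: "x = ennreal a" "y = ennreal b" "0 \<le> a" "0 \<le> b"
    by (metis enn2real_nonneg ennreal_enn2real_if)
  then have "a + b = 2"
    using assms by (metis ennreal_plus ennreal_inj add_nonneg_nonneg zero_le_numeral ennreal_numeral)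
  then show "enn2real x \<le> 2" "x = ennreal (enn2real x)" "y = ennreal (2 - enn2real x)"
    using ab by auto
qed

lemma binary_input_channel_output_uniform:
  assumes prob: "\<And>x. prob_space (K x)" and sets_K: "\<And>x. sets (K x) = sets M"
  obtains g where "binary_input_channel (output_dist (bernoulli_pmf (1/2)) K) K g"
proof -
  define \<nu> where "\<nu> = output_dist (bernoulli_pmf (1/2)) K"
  let ?r = "\<lambda>x. RN_deriv \<nu> (K x)"
  \<comment> \<open>The truncation at \<open>2\<close> only changes \<open>g\<close> on a null set, but makes \<open>\<bar>g\<bar> \<le> 1\<close> hold everywhere.\<close>
  define g where "g y = min (enn2real (?r False y)) 2 - 1" for y
  have AE_r: "AE y in \<nu>. ?r False y = ennreal (1 + g y) \<and> ?r True y = ennreal (1 - g y)"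
    using AE_RN_deriv_output_uniform_add[where K = K, OF prob sets_K, folded \<nu>_def]
  proof (rule eventually_mono)
    fix y assume "?r False y + ?r True y = 2"
    from ennreal_add_eq_2[OF this] show "?r False y = ennreal (1 + g y) \<and> ?r True y = ennreal (1 - g y)"
      by (simp add: g_def)
  qed
  have "binary_input_channel \<nu> K g"
  proof (intro binary_input_channel.intro binary_input_channel_axioms.intro)
    show "prob_space \<nu>"
      unfolding \<nu>_def using prob sets_K by (rule prob_space_output_dist)
    show "g \<in> borel_measurable \<nu>"
      unfolding g_def by measurable
    show "\<bar>g y\<bar> \<le> 1" for y
      by (simp add: g_def abs_le_iff)
    have "density \<nu> (?r False) = density \<nu> (\<lambda>y. 1 + g y)"
      and "density \<nu> (?r True) = density \<nu> (\<lambda>y. 1 - g y)"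
      using AE_r by (auto intro!: density_cong simp: g_def elim: eventually_mono)
    then show "K False = density \<nu> (\<lambda>y. 1 + g y)" "K True = density \<nu> (\<lambda>y. 1 - g y)"
      by (simp_all add: density_RN_deriv_output_uniform[where K = K, OF prob sets_K, folded \<nu>_def])
  qed (fact prob)
  then show thesis
    unfolding \<nu>_def by (rule that)
qed

text \<open>The identity channel is a binary input channel over the uniform law with \<open>g = \<plusminus>1\<close>.\<close>

lemma KL_div_measure_pmf_bool:
  assumes "\<bar>bias \<pi>'\<bar> < 1"
  shows "KL_div (measure_pmf \<pi>) (measure_pmf \<pi>') = ereal (binary_kl (bias \<pi>) (bias \<pi>'))"
proof -
  let ?U = "measure_pmf (bernoulli_pmf (1/2))"
  let ?K = "return (count_space UNIV) :: bool \<Rightarrow> bool measure"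
  define g :: "bool \<Rightarrow> real" where "g x = (if x then -1 else 1)" for x
  have density_eq: "return (count_space UNIV) x = density ?U (\<lambda>y. 1 + (if x then -1 else 1) * g y)" for x
  proof (rule measure_eqI)
    fix A :: "bool set"
    have "ennreal (1/2) * ennreal 2 = 1"
      by (subst ennreal_mult'[symmetric]) simp_all
    then show "emeasure (return (count_space UNIV) x) A =
                 emeasure (density ?U (\<lambda>y. 1 + (if x then -1 else 1) * g y)) A"
      by (cases x) (auto simp: emeasure_density nn_integral_measure_pmf_bool g_def split: split_indicator)
  qed simp
  interpret binary_input_channel ?U ?K g
  proof (intro binary_input_channel.intro binary_input_channel_axioms.intro)
    show "prob_space ?U"
      by (rule prob_space_measure_pmf)
    show "prob_space (?K x)" for x
      by (rule prob_space_return) simp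
    show "g \<in> borel_measurable ?U"
      by simp
    show "\<bar>g y\<bar> \<le> 1" for y
      by (simp add: g_def)
    show "?K False = density ?U (\<lambda>y. 1 + g y)" "?K True = density ?U (\<lambda>y. 1 - g y)"
      using density_eq[of False] density_eq[of True] by simp_all
  qed
  have "KL_div (output_dist \<pi> ?K) (output_dist \<pi>' ?K) =
          ereal (\<integral>y. kl_term (bias \<pi> * g y) (bias \<pi>' * g y) \<partial>?U)"
    using assms by (rule KL_div_output_dist_eq_integral_kl_term)
  moreover have "output_dist \<rho> ?K = measure_pmf \<rho>" for \<rho>
    unfolding output_dist_def by (rule bind_return'') simp
  ultimately show ?thesis
    by (simp add: integral_measure_pmf[where A = UNIV] UNIV_bool g_def binary_kl_def)
qed

lemma KL_div_measure_pmf_eq_infinity: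
  assumes "pmf \<pi>' x = 0" "pmf \<pi> x \<noteq> 0"
  shows "KL_div (measure_pmf \<pi>) (measure_pmf \<pi>') = \<infinity>"
proof -
  have "{x} \<in> null_sets (measure_pmf \<pi>')" "{x} \<notin> null_sets (measure_pmf \<pi>)"
    using assms by (simp_all add: null_sets_def emeasure_pmf_single)
  then have "\<not> absolutely_continuous (measure_pmf \<pi>') (measure_pmf \<pi>)"
    unfolding absolutely_continuous_def by blast
  then show ?thesis
    by (simp add: KL_div_def)
qed

lemma abs_bias_less_1_if_KL_div_finite:
  assumes "\<pi> \<noteq> \<pi>'" "KL_div (measure_pmf \<pi>) (measure_pmf \<pi>') < \<infinity>"
  shows "\<bar>bias \<pi>'\<bar> < 1"
proof (rule ccontr)
  assume "\<not> \<bar>bias \<pi>'\<bar> < 1"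
  then have "pmf \<pi>' True = 0 \<or> pmf \<pi>' True = 1"
    using abs_bias_le_1[of \<pi>'] by (auto simp: bias_conv_pmf_True abs_if split: if_splits)
  then obtain x where x: "pmf \<pi>' x = 0"
    using pmf_False_conv_True[of \<pi>'] by (metis diff_self)
  have "pmf \<pi> x \<noteq> 0"
  proof
    assume "pmf \<pi> x = 0"
    then have "bias \<pi> = bias \<pi>'"
      using x by (cases x) (simp_all add: bias_conv_pmf_True pmf_False_conv_True)
    with assms(1) show False
      by (simp add: bias_inject)
  qed
  with x assms(2) show False
    by (simp add: KL_div_measure_pmf_eq_infinity)
qed

section \<open>Symmetric channels\<close>

locale binary_symmetric_channel = binary_input_channel +
  fixes T :: "'a \<Rightarrow> 'a"
  assumes T_measurable [measurable]: "T \<in> \<nu> \<rightarrow>\<^sub>M \<nu>"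
    and T_involution: "y \<in> space \<nu> \<Longrightarrow> T (T y) = y"
    and distr_K_False: "distr (K False) \<nu> T = K True"
begin

lemma emeasure_K_vimage:
  assumes "A \<in> sets \<nu>"
  shows "emeasure (K x) (T -` A \<inter> space \<nu>) = emeasure (K (\<not> x)) A"
proof -
  have "distr (K True) \<nu> T = distr (K False) \<nu> (T \<circ> T)"
    unfolding distr_K_False[symmetric] by (intro distr_distr) measurable
  also have "\<dots> = distr (K False) \<nu> (\<lambda>y. y)"
    using T_involution by (intro distr_cong) (simp_all add: sets_eq_imp_space_eq[OF sets_K])
  also have "\<dots> = K False"
    by (simp add: distr_id2 sets_K)
  finally have "distr (K x) \<nu> T = K (\<not> x)"
    using distr_K_False by (cases x) simp_all
  moreover have "T \<in> K x \<rightarrow>\<^sub>M \<nu>"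
    by measurable
  ultimately show ?thesis
    using assms emeasure_distr[of T "K x" \<nu> A] by (simp add: sets_eq_imp_space_eq[OF sets_K])
qed

lemma distr_T_eq: "distr \<nu> \<nu> T = \<nu>"
proof (rule measure_eqI)
  fix A assume "A \<in> sets (distr \<nu> \<nu> T)"
  then have A: "A \<in> sets \<nu>"
    by simp
  have average: "emeasure \<nu> B = ennreal (1/2) * emeasure (K False) B + ennreal (1/2) * emeasure (K True) B"
    if "B \<in> sets \<nu>" for B
    using emeasure_output_dist[where K = K, OF prob_space_K sets_K that, of "bernoulli_pmf (1/2)"]
    by (simp add: output_dist_uniform)
  have "T -` A \<inter> space \<nu> \<in> sets \<nu>"
    using A by measurable
  then have "emeasure \<nu> (T -` A \<inter> space \<nu>) = emeasure \<nu> A"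
    using A by (simp add: average emeasure_K_vimage add.commute)
  then show "emeasure (distr \<nu> \<nu> T) A = emeasure \<nu> A"
    using A by (simp add: emeasure_distr)
qed simp

lemma AE_g_T_eq_minus: "AE y in \<nu>. g (T y) = - g y"
proof -
  have "density \<nu> (\<lambda>y. 1 + g (T y)) = distr (K False) \<nu> T"
    using distr_density_distr[of T \<nu> \<nu> T "\<lambda>y. 1 + g y"] T_involution
    by (simp add: distr_T_eq K_False comp_def)
  also have "\<dots> = density \<nu> (\<lambda>y. 1 - g y)"
    by (simp add: distr_K_False K_True)
  finally have "AE y in \<nu>. ennreal (1 + g (T y)) = ennreal (1 - g y)"
    by (intro density_unique) auto
  then show ?thesis
  proof (rule AE_mp, intro AE_I2 impI)
    fix y assume "y \<in> space \<nu>" "ennreal (1 + g (T y)) = ennreal (1 - g y)"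
    moreover have "T y \<in> space \<nu>"
      using \<open>y \<in> space \<nu>\<close> by (rule measurable_space[OF T_measurable])
    ultimately show "g (T y) = - g y"
      using abs_g_le_1[of y] abs_g_le_1[of "T y"] by (simp add: abs_le_iff)
  qed
qed

lemma integral_kl_term_eq_integral_binary_kl:
  assumes "\<bar>a\<bar> \<le> 1" "\<bar>b\<bar> < 1"
  shows "(\<integral>y. kl_term (a * g y) (b * g y) \<partial>\<nu>) = (\<integral>y. binary_kl (a * g y) (b * g y) \<partial>\<nu>)"
proof -
  have "(\<integral>y. kl_term (a * g y) (b * g y) \<partial>\<nu>) = (\<integral>y. kl_term (a * g (T y)) (b * g (T y)) \<partial>\<nu>)"
    using integral_distr[of T \<nu> \<nu> "\<lambda>y. kl_term (a * g y) (b * g y)"] by (simp add: distr_T_eq kl_term_def)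
  also have "\<dots> = (\<integral>y. kl_term (- a * g y) (- b * g y) \<partial>\<nu>)"
    using AE_g_T_eq_minus by (intro integral_cong_AE) (auto simp: kl_term_def elim: eventually_mono)
  finally show ?thesis
    using integrable_kl_term[OF assms] integrable_kl_term[of "-a" "-b"] assms
    by (simp add: binary_kl_def)
qed

lemma KL_div_output_dist_eq_integral_binary_kl:
  assumes "\<bar>bias \<pi>'\<bar> < 1"
  shows "KL_div (output_dist \<pi> K) (output_dist \<pi>' K) =
           ereal (\<integral>y. binary_kl (bias \<pi> * g y) (bias \<pi>' * g y) \<partial>\<nu>)"
  using assms abs_bias_le_1
  by (simp add: KL_div_output_dist_eq_integral_kl_term integral_kl_term_eq_integral_binary_kl)

lemma KL_div_ratio_le:
  assumes "\<pi> \<noteq> \<pi>'" "0 < KL_div (measure_pmf \<pi>) (measure_pmf \<pi>')"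
    and "KL_div (measure_pmf \<pi>) (measure_pmf \<pi>') < \<infinity>"
  shows "KL_div (output_dist \<pi> K) (output_dist \<pi>' K) / KL_div (measure_pmf \<pi>) (measure_pmf \<pi>')
           \<le> ereal (\<integral>y. (g y)\<^sup>2 \<partial>\<nu>)"
proof -
  have b: "\<bar>bias \<pi>'\<bar> < 1"
    using assms(1,3) by (rule abs_bias_less_1_if_KL_div_finite)
  let ?D = "binary_kl (bias \<pi>) (bias \<pi>')"
  have D: "0 < ?D"
    using assms(2) KL_div_measure_pmf_bool[OF b] by simp
  have "(\<integral>y. binary_kl (bias \<pi> * g y) (bias \<pi>' * g y) \<partial>\<nu>) / ?D \<le> (\<integral>y. (g y)\<^sup>2 \<partial>\<nu>)"
    using integral_binary_kl_le[OF abs_bias_le_1 b] D by (simp add: divide_le_eq)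
  then show ?thesis
    using D by (simp add: KL_div_output_dist_eq_integral_binary_kl[OF b] KL_div_measure_pmf_bool[OF b])
qed

lemma KL_div_ratio_ge:
  assumes e: "0 < bias \<pi>" "bias \<pi> < 1" and "bias \<pi>' = 0"
  shows "ereal ((1 - bias \<pi>) * (\<integral>y. (g y)\<^sup>2 \<partial>\<nu>))
           \<le> KL_div (output_dist \<pi> K) (output_dist \<pi>' K) / KL_div (measure_pmf \<pi>) (measure_pmf \<pi>')"
proof -
  let ?e = "bias \<pi>" and ?c = "\<integral>y. (g y)\<^sup>2 \<partial>\<nu>"
  have D: "0 < binary_kl ?e 0"
    using e by (intro binary_kl_zero_pos) auto
  have "0 \<le> ?c"
    by simp
  then have "(1 - ?e) * ?c * binary_kl ?e 0 \<le> (1 - ?e) * ?c * (?e\<^sup>2 / (2 * (1 - ?e)))"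
    using e by (intro mult_left_mono binary_kl_zero_le) simp_all
  also have "\<dots> = ?e\<^sup>2 / 2 * ?c"
    using e by (simp add: field_simps)
  also have "\<dots> \<le> (\<integral>y. binary_kl (?e * g y) 0 \<partial>\<nu>)"
    using e by (intro integral_binary_kl_zero_ge) simp
  finally show ?thesis
    using assms D by (simp add: KL_div_output_dist_eq_integral_binary_kl KL_div_measure_pmf_bool le_divide_eq)
qed

theorem eta_KL_eq: "eta_KL K = ereal (\<integral>y. (g y)\<^sup>2 \<partial>\<nu>)"
proof -
  let ?c = "\<integral>y. (g y)\<^sup>2 \<partial>\<nu>"
  define S :: "(bool pmf \<times> bool pmf) set" where
    "S = {(\<pi>, \<pi>'). \<pi> \<noteq> \<pi>' \<and> 0 < KL_div (measure_pmf \<pi>) (measure_pmf \<pi>') \<and>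
                     KL_div (measure_pmf \<pi>) (measure_pmf \<pi>') < \<infinity>}"
  define R where
    "R p = KL_div (output_dist (fst p) K) (output_dist (snd p) K) /
             KL_div (measure_pmf (fst p)) (measure_pmf (snd p))" for p
  have eta: "eta_KL K = (SUP p\<in>S. R p)"
    unfolding eta_KL_def S_def R_def ..
  have upper: "(SUP p\<in>S. R p) \<le> ereal ?c"
    by (rule SUP_least) (auto simp: S_def R_def intro: KL_div_ratio_le)
  have lower: "ereal (z * ?c) \<le> (SUP p\<in>S. R p)" if "0 < z" "z < 1" for z
  proof -
    let ?\<pi> = "bernoulli_pmf (z / 2)" and ?\<pi>' = "bernoulli_pmf (1 / 2)"
    have bias: "bias ?\<pi> = 1 - z" "bias ?\<pi>' = 0"
      using that by (simp_all add: bias_bernoulli_pmf)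
    then have "ereal (z * ?c) \<le> R (?\<pi>, ?\<pi>')"
      using KL_div_ratio_ge[of ?\<pi> ?\<pi>'] that by (simp add: R_def)
    moreover have "KL_div (measure_pmf ?\<pi>) (measure_pmf ?\<pi>') = ereal (binary_kl (1 - z) 0)"
      using KL_div_measure_pmf_bool[of ?\<pi>' ?\<pi>] bias by simp
    moreover have "0 < binary_kl (1 - z) 0"
      using that by (intro binary_kl_zero_pos) auto
    ultimately show ?thesis
      using bias by (intro SUP_upper2[of "(?\<pi>, ?\<pi>')"]) (auto simp: S_def simp flip: bias_inject)
  qed
  have "ereal ?c \<le> (SUP p\<in>S. R p)"
  proof (rule ereal_le_mult_one_interval)
    show "(SUP p\<in>S. R p) \<noteq> -\<infinity>"
      using lower[of "1/2"] by auto
    fix z :: ereal assume "0 < z" "z < 1"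
    then show "z * ereal ?c \<le> (SUP p\<in>S. R p)"
      using lower by (cases z) auto
  qed
  with upper eta show ?thesis
    by simp
qed

end

lemma (in binary_input_channel) binary_symmetric_channelI:
  assumes sets_\<nu>: "sets \<nu> = sets M" and T_meas: "T \<in> M \<rightarrow>\<^sub>M M"
    and T_inv: "\<And>y. y \<in> space M \<Longrightarrow> T (T y) = y"
    and symm: "\<And>A. A \<in> sets M \<Longrightarrow> emeasure (K False) (T -` A \<inter> space M) = emeasure (K True) A"
  shows "binary_symmetric_channel \<nu> K g T"
proof
  show T_measurable: "T \<in> \<nu> \<rightarrow>\<^sub>M \<nu>"
    using T_meas by (simp add: measurable_cong_sets[OF sets_\<nu> sets_\<nu>])
  show "T (T y) = y" if "y \<in> space \<nu>" for y
    using T_inv that sets_eq_imp_space_eq[OF sets_\<nu>] by simp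
  show "distr (K False) \<nu> T = K True"
  proof (rule measure_eqI)
    fix A assume "A \<in> sets (distr (K False) \<nu> T)"
    moreover have "T \<in> K False \<rightarrow>\<^sub>M \<nu>"
      using T_measurable by (simp add: measurable_cong_sets[OF sets_K refl])
    ultimately show "emeasure (distr (K False) \<nu> T) A = emeasure (K True) A"
      using symm[of A] sets_\<nu>
      by (simp add: emeasure_distr sets_eq_imp_space_eq[OF sets_K] sets_eq_imp_space_eq[OF sets_\<nu>])
  qed (simp add: sets_K)
qed

theorem mainTheorem12:
  fixes K :: "bool \<Rightarrow> 'b measure" and M :: "'b measure" and T :: "'b \<Rightarrow> 'b"
  assumes prob: "\<And>x. prob_space (K x)"
    and sets_K: "\<And>x. sets (K x) = sets M"
    and T_meas: "T \<in> measurable M M"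
    and T_inv: "\<And>y. y \<in> space M \<Longrightarrow> T (T y) = y"
    and symm: "\<And>A. A \<in> sets M \<Longrightarrow>
                 emeasure (K False) (T -` A \<inter> space M) = emeasure (K True) A"
  shows "eta_KL K = chi2_mutual_info (bernoulli_pmf (1/2)) K"
proof -
  define \<nu> where "\<nu> = output_dist (bernoulli_pmf (1/2)) K"
  obtain g where channel: "binary_input_channel \<nu> K g"
    unfolding \<nu>_def using prob sets_K by (rule binary_input_channel_output_uniform)
  have "sets \<nu> = sets M"
    unfolding \<nu>_def using sets_K by (rule sets_output_dist)
  then interpret binary_symmetric_channel \<nu> K g T
    using T_meas T_inv symm by (rule binary_input_channel.binary_symmetric_channelI[OF channel])
  show ?thesis
    by (simp add: eta_KL_eq chi2_mutual_info_uniform)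
qed

end
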